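(* Let $G=\mathbb{Z}_2\times\mathbb{Z}_2$, $\mathcal{L}=\{0,1,2\}$, and $L:G\to\mathcal{L}$ defined by $L((0,0))=0$, $L((0,1))=1$, $L((1,0))=L((1,1))=2$. Then $L$ is friendly.
   Context: For $m\ge3$ let $Z_m=\{(g_1,\dots,g_m)\in G^m: g_1+\cdots+g_{m-1}=g_m\}$, let $\widetilde{L}:Z_m\to\mathcal{L}^m$ be $\widetilde L(g_1,\dots,g_m)=(L(g_1),\dots,L(g_m))$, and let $\pi_i:G^m\to G$ be the $i$-th coordinate projection. $L$ is called $m$-friendly if for every $l=(l_1,\dots,l_m)\in\widetilde{L}(Z_m)$ and every $i=1,\dots,m$ one has $\pi_i(\widetilde{L}^{-1}(l))=L^{-1}(l_i)$. $L$ is friendly if it is $m$-friendly for all $m\ge3$. *)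

theory Defs
  imports Main "HOL-Library.Z2" "HOL-Library.Product_Plus"
begin

definition Zm :: "nat \<Rightarrow> ('g::ab_group_add) list set" where
  "Zm m = {gs. length gs = m \<and> sum_list (butlast gs) = last gs}"

definition Ltilde :: "('g \<Rightarrow> 'l) \<Rightarrow> 'g list \<Rightarrow> 'l list" where
  "Ltilde L gs = map L gs"

text \<open>m-friendly (coordinates indexed 0..m-1 instead of 1..m).\<close>
definition m_friendly :: "nat \<Rightarrow> (('g::ab_group_add) \<Rightarrow> 'l) \<Rightarrow> bool" where
  "m_friendly m L \<longleftrightarrow>
     (\<forall>l \<in> Ltilde L ` Zm m. \<forall>i < m.
        (\<lambda>gs. gs ! i) ` ({gs \<in> Zm m. Ltilde L gs = l}) = L -` {l ! i})"

definition friendly :: "(('g::ab_group_add) \<Rightarrow> 'l) \<Rightarrow> bool" where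
  "friendly L \<longleftrightarrow> (\<forall>m\<ge>3. m_friendly m L)"

definition Lex :: "bit \<times> bit \<Rightarrow> nat" where
  "Lex g = (if g = (0,0) then 0 else if g = (0,1) then 1 else 2)"

end

theory Submission
  imports Defs
begin

text \<open>In \<open>\<int>\<^sub>2 \<times> \<int>\<^sub>2\<close> every element is its own inverse, so \<open>Z\<^sub>m\<close> consists of the \<open>m\<close>-tuples
  with total sum \<open>0\<close>. The only non-singleton fibre of \<open>L\<close> is \<open>L\<^sup>-\<^sup>1(2) = {(1,0), (1,1)}\<close>,
  a coset of \<open>{0, (0,1)}\<close>. To move a coordinate \<open>g\<^sub>i\<close> with label \<open>2\<close> to the other element
  of its fibre, add \<open>(0,1)\<close> to it and to a second coordinate \<open>g\<^sub>j\<close> with label \<open>2\<close>: this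
  preserves both the sum and all labels. Such a \<open>j\<close> exists because the first components
  of the \<open>g\<^sub>k\<close> sum to \<open>0\<close>, so the first component \<open>1\<close> of \<open>g\<^sub>i\<close> must be cancelled.\<close>

lemma m_friendly_iff:
  "m_friendly m L \<longleftrightarrow>
     (\<forall>gs \<in> Zm m. \<forall>i < m. \<forall>g. L g = L (gs ! i) \<longrightarrow>
        (\<exists>hs \<in> Zm m. map L hs = map L gs \<and> hs ! i = g))"
proof -
  have preimage_eq_iff:
    "(\<lambda>hs. hs ! i) ` {hs \<in> Zm m. map L hs = map L gs} = L -` {map L gs ! i} \<longleftrightarrow>
       (\<forall>g. L g = L (gs ! i) \<longrightarrow> (\<exists>hs \<in> Zm m. map L hs = map L gs \<and> hs ! i = g))"
    if "gs \<in> Zm m" "i < m" for gs i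
  proof -
    have "length gs = m"
      using that(1) by (simp add: Zm_def)
    have "L (hs ! i) = L (gs ! i)" if "hs \<in> Zm m" "map L hs = map L gs" for hs
      using arg_cong[OF that(2), of "\<lambda>xs. xs ! i"] that(1) \<open>length gs = m\<close> \<open>i < m\<close>
      by (simp add: Zm_def)
    then have "(\<lambda>hs. hs ! i) ` {hs \<in> Zm m. map L hs = map L gs} \<subseteq> L -` {map L gs ! i}"
      using \<open>length gs = m\<close> \<open>i < m\<close> by auto
    moreover have "L -` {map L gs ! i} \<subseteq> (\<lambda>hs. hs ! i) ` {hs \<in> Zm m. map L hs = map L gs}
        \<longleftrightarrow> (\<forall>g. L g = L (gs ! i) \<longrightarrow> (\<exists>hs \<in> Zm m. map L hs = map L gs \<and> hs ! i = g))"
      using \<open>length gs = m\<close> \<open>i < m\<close> by (auto simp: subset_iff image_iff)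
    ultimately show ?thesis
      by (simp only: set_eq_subset) blast
  qed
  show ?thesis
    unfolding m_friendly_def Ltilde_def by (auto simp: preimage_eq_iff)
qed

lemma Zm_iff_sum_list_eq_0:
  fixes gs :: "'g::ab_group_add list"
  assumes self_inverse: "\<And>x::'g. x + x = 0" and "m \<ge> 1"
  shows "gs \<in> Zm m \<longleftrightarrow> length gs = m \<and> sum_list gs = 0"
proof (cases "gs = []")
  case True
  then show ?thesis using \<open>m \<ge> 1\<close> by (auto simp: Zm_def)
next
  case False
  have "sum_list gs = sum_list (butlast gs) + last gs"
    by (metis False append_butlast_last_id sum_list_append sum_list.Cons sum_list.Nil add_0_right)
  moreover have "x = y \<longleftrightarrow> x + y = 0" for x y :: 'g
    by (metis self_inverse add_right_cancel)
  ultimately show ?thesis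
    by (simp add: Zm_def)
qed

lemma sum_list_list_update:
  fixes xs :: "'a::ab_group_add list"
  shows "i < length xs \<Longrightarrow> sum_list (xs[i := x]) = sum_list xs - xs ! i + x"
  by (induction xs arbitrary: i) (auto split: nat.splits simp: algebra_simps)

lemma fst_sum_list: "fst (sum_list xs) = sum_list (map fst xs)"
  by (induction xs) simp_all

lemma sum_list_eq_0_other_nonzero:
  fixes xs :: "'a::comm_monoid_add list"
  assumes "sum_list xs = 0" "i < length xs" "xs ! i \<noteq> 0"
  shows "\<exists>j < length xs. j \<noteq> i \<and> xs ! j \<noteq> 0"
proof (rule ccontr)
  assume "\<not> ?thesis"
  then have "(\<Sum>k\<in>{..<length xs} - {i}. xs ! k) = 0"
    by (intro sum.neutral) auto
  then have "sum_list xs = xs ! i"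
    using \<open>i < length xs\<close> by (simp add: sum_list_sum_nth atLeast0LessThan sum.remove)
  then show False
    using assms by simp
qed

lemma bit_cases: "(b::bit) = 0 \<or> b = 1"
  using bit_not_zero_iff by blast

lemma bit_pair_add_self: "(g::bit \<times> bit) + g = 0"
  by (cases g) (simp add: zero_prod_def)

lemma Lex_eq_Lex_iff: "Lex g = Lex h \<longleftrightarrow> g = h \<or> (fst h = 1 \<and> g = h + (0, 1))"
  using bit_cases[of "fst g"] bit_cases[of "snd g"] bit_cases[of "fst h"] bit_cases[of "snd h"]
  by (cases g; cases h) (auto simp: Lex_def)

lemma Lex_fibre_realizable:
  fixes gs :: "(bit \<times> bit) list"
  assumes sum: "sum_list gs = 0" and i: "i < length gs" and label: "Lex g = Lex (gs ! i)"
  shows "\<exists>hs. length hs = length gs \<and> sum_list hs = 0 \<and> map Lex hs = map Lex gs \<and> hs ! i = g"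
proof (cases "g = gs ! i")
  case True
  then show ?thesis using sum by blast
next
  case False
  let ?e = "(0, 1) :: bit \<times> bit"
  have fst_i: "fst (gs ! i) = 1" and g: "g = gs ! i + ?e"
    using label False by (auto simp: Lex_eq_Lex_iff)
  obtain j where j: "j < length gs" "j \<noteq> i" "fst (gs ! j) = 1"
    using sum_list_eq_0_other_nonzero[of "map fst gs" i] sum fst_i i
    by (auto simp: fst_sum_list[symmetric])
  define hs where "hs = gs[i := gs ! i + ?e, j := gs ! j + ?e]"
  have "sum_list hs = sum_list gs + (?e + ?e)"
    using i j by (simp add: hs_def sum_list_list_update nth_list_update algebra_simps)
  then have "sum_list hs = 0"
    using sum by (simp only: bit_pair_add_self add_0_right)
  moreover have "map Lex hs = map Lex gs"
    using i j fst_i by (auto simp: hs_def list_eq_iff_nth_eq nth_list_update Lex_eq_Lex_iff)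
  moreover have "hs ! i = g"
    using i j g by (simp add: hs_def)
  moreover have "length hs = length gs"
    by (simp add: hs_def)
  ultimately show ?thesis
    by blast
qed

theorem mainTheorem4:
  shows "friendly Lex"
  unfolding friendly_def m_friendly_iff
proof (intro allI impI ballI)
  fix m i g and gs :: "(bit \<times> bit) list"
  assume "3 \<le> m" "gs \<in> Zm m" "i < m" "Lex g = Lex (gs ! i)"
  moreover have "hs \<in> Zm m \<longleftrightarrow> length hs = m \<and> sum_list hs = 0" for hs :: "(bit \<times> bit) list"
    using bit_pair_add_self \<open>3 \<le> m\<close> by (intro Zm_iff_sum_list_eq_0) auto
  ultimately show "\<exists>hs \<in> Zm m. map Lex hs = map Lex gs \<and> hs ! i = g"
    using Lex_fibre_realizable[of gs i g] by auto
qed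

end
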